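(* Let $R>0$, $t\neq 0$, $c=\frac{1-t^2}{1+t^2}$, $s=\frac{2t}{1+t^2}$, and set $k=1$. Consider the trisector $$T=\{(x,y,z)\in\mathbb{R}^3:\ y^2-(xs-yc)^2+2z-1=0,\ \bigl(x^2-2z+R^2+1\bigr)^2-4R^2(x^2+y^2)=0\}.$$ Then this degree-eight trisector is reducible and splits into two algebraic space curves of degree four. These two quartic components intersect in exactly two real affine points, $$\Bigl(Rc,Rs,\tfrac{1-R^2s^2}{2}\Bigr)\quad\text{and}\quad\Bigl(-Rc,-Rs,\tfrac{1-R^2s^2}{2}\Bigr),$$ and each of these two points is an ordinary real node of the trisector.
   Context: This is the trisector at parameter value $k=1$ of the $x$-axis, the line through $(0,0,1)$ with direction $(c,s,0)$, and the circle of radius $R$ centered at $(0,0,k)$ in the plane $z=k$. An ordinary real node is a point where the curve is locally the union of two smooth branches with distinct tangent lines. *)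

theory Defs
  imports "HOL-Analysis.Analysis" "HOL-Computational_Algebra.Polynomial"
begin

type_synonym pt3 = "real \<times> real \<times> real"
type_synonym cpt3 = "complex \<times> complex \<times> complex"

definition tris_P :: "'a::comm_ring_1 \<Rightarrow> 'a \<Rightarrow> 'a \<Rightarrow> 'a \<Rightarrow> 'a \<Rightarrow> 'a" where
  "tris_P s c x y z = y^2 - (x * s - y * c)^2 + 2*z - 1"

definition tris_Q :: "'a::comm_ring_1 \<Rightarrow> 'a \<Rightarrow> 'a \<Rightarrow> 'a \<Rightarrow> 'a" where
  "tris_Q R x y z = (x^2 - 2*z + R^2 + 1)^2 - 4*R^2*(x^2 + y^2)"

definition trisector :: "real \<Rightarrow> real \<Rightarrow> real \<Rightarrow> pt3 set" where
  "trisector R s c = {(x,y,z). tris_P s c x y z = 0 \<and> tris_Q R x y z = 0}"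

definition trisector_C :: "real \<Rightarrow> real \<Rightarrow> real \<Rightarrow> cpt3 set" where
  "trisector_C R s c = {(x,y,z). tris_P (of_real s) (of_real c) x y z = 0
                              \<and> tris_Q (of_real R) x y z = 0}"

text \<open>A real polynomial in x,y,z is represented as an element of real poly poly poly
  (outer variable x, then y, innermost z); it is evaluated at complex points.\<close>

definition eval3 :: "real poly poly poly \<Rightarrow> cpt3 \<Rightarrow> complex" where
  "eval3 p q = (case q of (x,y,z) \<Rightarrow>
     poly (map_poly (\<lambda>a. poly (map_poly (\<lambda>b. poly (map_poly complex_of_real b) z) a) y) p) x)"

definition algebraic_set3 :: "cpt3 set \<Rightarrow> bool" where
  "algebraic_set3 S \<longleftrightarrow> (\<exists>F. finite F \<and> S = {q. \<forall>f\<in>F. eval3 f q = 0})"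

definition cplane :: "cpt3 set \<Rightarrow> bool" where
  "cplane H \<longleftrightarrow> (\<exists>a b c d. (a,b,c) \<noteq> (0,0,0) \<and> H = {(x,y,z). a*x + b*y + c*z = d})"

text \<open>Algebraic space curve (pure dimension one): a nonempty algebraic set without
  isolated points such that through every point of it passes a plane meeting it in
  finitely many points.\<close>

definition space_curve :: "cpt3 set \<Rightarrow> bool" where
  "space_curve C \<longleftrightarrow> algebraic_set3 C \<and> C \<noteq> {} \<and> (\<forall>q\<in>C. q islimpt C)
     \<and> (\<forall>q\<in>C. \<exists>H. cplane H \<and> q \<in> H \<and> finite (C \<inter> H))"

definition space_curve_of_degree :: "cpt3 set \<Rightarrow> nat \<Rightarrow> bool" where
  "space_curve_of_degree C d \<longleftrightarrow> space_curve C
     \<and> (\<forall>H. cplane H \<and> finite (C \<inter> H) \<longrightarrow> card (C \<inter> H) \<le> d)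
     \<and> (\<exists>H. cplane H \<and> finite (C \<inter> H) \<and> card (C \<inter> H) = d)"

definition cpt_of_real :: "pt3 \<Rightarrow> cpt3" where
  "cpt_of_real p = (case p of (x,y,z) \<Rightarrow> (complex_of_real x, complex_of_real y, complex_of_real z))"

definition smooth_curve_on :: "real set \<Rightarrow> (real \<Rightarrow> 'a::real_normed_vector) \<Rightarrow> bool" where
  "smooth_curve_on I g \<longleftrightarrow> (\<exists>D::nat \<Rightarrow> real \<Rightarrow> 'a. (\<forall>t\<in>I. D 0 t = g t)
      \<and> (\<forall>n. \<forall>t\<in>I. (D n has_vector_derivative D (Suc n) t) (at t)))"

definition smooth_branch :: "real \<Rightarrow> (real \<Rightarrow> pt3) \<Rightarrow> pt3 \<Rightarrow> bool" where
  "smooth_branch e g p \<longleftrightarrow> e > 0 \<and> smooth_curve_on {-e<..<e} g \<and> g 0 = p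
     \<and> inj_on g {-e<..<e} \<and> continuous_on (g ` {-e<..<e}) (inv_into {-e<..<e} g)
     \<and> (\<forall>t\<in>{-e<..<e}. vector_derivative g (at t) \<noteq> 0)"

definition ordinary_real_node :: "pt3 set \<Rightarrow> pt3 \<Rightarrow> bool" where
  "ordinary_real_node S p \<longleftrightarrow> p \<in> S \<and> (\<exists>U e g1 g2. open U \<and> p \<in> U
     \<and> smooth_branch e g1 p \<and> smooth_branch e g2 p
     \<and> (\<forall>a. vector_derivative g2 (at 0) \<noteq> a *\<^sub>R vector_derivative g1 (at 0))
     \<and> S \<inter> U = g1 ` {-e<..<e} \<union> g2 ` {-e<..<e})"

end

(* In the coordinates u = x c + y s, v = x s - y c adapted to the line, the equation P = 0 of
   the trisector reads 2 z = 1 - y^2 + v^2, and on it Q factors as L_1 L_-1 with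
   L_\<sigma> = u^2 - R^2 - 2 \<sigma> R v.  Each component {P = 0, L_\<sigma> = 0} is the image of the injective
   polynomial map w \<mapsto> (u, v) = (\<sigma> w, \<sigma> (w^2 - R^2) / (2 R)), z read off from P, which has
   degree 4 in w.  Hence a plane not containing a component meets it in at most four points, and
   the plane z = 1/2 meets it in exactly four: the roots of two real quadratics, each with
   product of roots -R^2.  The components meet where L_1 = L_-1 = 0, that is v = 0 and u = \<plusminus>R.
   Near such a point the real trisector is the union of the two real arcs of the components,
   parametrized by u; their tangent vectors have (u, v)-coordinates (\<plusminus>1, u/R), so they are
   not parallel. *)

theory Submission
  imports Defs "HOL-Library.Quadratic_Discriminant"
begin

section \<open>The splitting of the trisector\<close>

definition tris_L :: "'a::comm_ring_1 \<Rightarrow> 'a \<Rightarrow> 'a \<Rightarrow> 'a \<Rightarrow> 'a \<Rightarrow> 'a \<Rightarrow> 'a" where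
  "tris_L R s c \<sigma> x y = (x * c + y * s)^2 - R^2 - 2 * R * \<sigma> * (x * s - y * c)"

lemma tris_Q_factor:
  fixes x y z :: "'a::idom"
  assumes "s^2 + c^2 = 1" and "tris_P s c x y z = 0"
  shows "tris_Q R x y z = tris_L R s c 1 x y * tris_L R s c (-1) x y"
  using assms unfolding tris_P_def tris_Q_def tris_L_def by algebra

lemma trisector_iff_components:
  fixes x y z :: "'a::idom"
  assumes "s^2 + c^2 = 1"
  shows "tris_P s c x y z = 0 \<and> tris_Q R x y z = 0 \<longleftrightarrow>
    tris_P s c x y z = 0 \<and> (tris_L R s c 1 x y = 0 \<or> tris_L R s c (-1) x y = 0)"
  using tris_Q_factor[OF assms] by auto

definition quartic_param :: "'a::field_char_0 \<Rightarrow> 'a \<Rightarrow> 'a \<Rightarrow> 'a \<Rightarrow> 'a \<Rightarrow> 'a \<times> 'a \<times> 'a" where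
  "quartic_param R s c \<sigma> w =
     (let v = (w^2 - R^2) / (2 * R) in (\<sigma> * (w * c + v * s), \<sigma> * (w * s - v * c), (1 - (w * s - v * c)^2 + v^2) / 2))"

lemma quartic_param_via_v:
  fixes R :: "'a::field_char_0"
  assumes "R \<noteq> 0" and "2 * R * v = w^2 - R^2"
  shows "quartic_param R s c \<sigma> w =
    (\<sigma> * (w * c + v * s), \<sigma> * (w * s - v * c), (1 - (w * s - v * c)^2 + v^2) / 2)"
proof -
  have "v = (w^2 - R^2) / (2 * R)" using assms by (simp add: field_simps)
  then show ?thesis by (simp add: quartic_param_def Let_def)
qed

lemma quartic_param_eq_iff:
  fixes R :: "'a::field_char_0"
  assumes "R \<noteq> 0" and "s^2 + c^2 = 1" and "\<sigma>^2 = 1"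
  shows "(x, y, z) = quartic_param R s c \<sigma> w \<longleftrightarrow>
    tris_P s c x y z = 0 \<and> tris_L R s c \<sigma> x y = 0 \<and> \<sigma> * (x * c + y * s) = w"
proof -
  define v where "v = (w^2 - R^2) / (2 * R)"
  have v: "2 * R * v = w^2 - R^2" using assms(1) by (simp add: v_def)
  have "(x, y, z) = quartic_param R s c \<sigma> w \<longleftrightarrow>
      x = \<sigma> * (w * c + v * s) \<and> y = \<sigma> * (w * s - v * c) \<and> 2 * z = 1 - (w * s - v * c)^2 + v^2"
    unfolding quartic_param_via_v[OF assms(1) v] by (auto simp: mult.commute[of _ 2])
  also have "\<dots> \<longleftrightarrow> \<sigma> * (x * c + y * s) = w \<and> \<sigma> * (x * s - y * c) = v \<and> tris_P s c x y z = 0"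
    using assms(2,3) unfolding tris_P_def by algebra
  also have "\<dots> \<longleftrightarrow> tris_P s c x y z = 0 \<and> tris_L R s c \<sigma> x y = 0 \<and> \<sigma> * (x * c + y * s) = w"
  proof (cases "\<sigma> * (x * c + y * s) = w")
    case True
    then have "w^2 = (x * c + y * s)^2"
      using assms(3) by (auto simp: power_mult_distrib)
    then have "2 * R * (\<sigma> * (x * s - y * c) - v) = - tris_L R s c \<sigma> x y"
      using v unfolding tris_L_def by (simp add: algebra_simps)
    then show ?thesis using True assms(1) by auto
  qed simp
  finally show ?thesis .
qed

lemma quartic_param_rotated:
  fixes R :: "'a::field_char_0"
  assumes "R \<noteq> 0" and "s^2 + c^2 = 1" and "quartic_param R s c \<sigma> w = (x, y, z)"
  shows "x * c + y * s = \<sigma> * w" and "x * s - y * c = \<sigma> * ((w^2 - R^2) / (2 * R))"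
proof -
  define v where "v = (w^2 - R^2) / (2 * R)"
  have v: "2 * R * v = w^2 - R^2" using assms(1) by (simp add: v_def)
  have x: "x = \<sigma> * (w * c + v * s)" and y: "y = \<sigma> * (w * s - v * c)"
    using assms(3) unfolding quartic_param_via_v[OF assms(1) v] by auto
  show "x * c + y * s = \<sigma> * w" "x * s - y * c = \<sigma> * ((w^2 - R^2) / (2 * R))"
    unfolding x y v_def[symmetric] using assms(2) by algebra+
qed

definition level_quadratic :: "'a::comm_ring_1 \<Rightarrow> 'a \<Rightarrow> 'a \<Rightarrow> 'a \<Rightarrow> 'a" where
  "level_quadratic R s a w = a * w^2 - 2 * R * s * w - a * R^2"

lemma quartic_param_z_eq_half_iff:
  fixes R :: "'a::field_char_0"
  assumes "R \<noteq> 0"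
  shows "snd (snd (quartic_param R s c \<sigma> w)) = 1/2 \<longleftrightarrow>
    level_quadratic R s (1 + c) w * level_quadratic R (- s) (1 - c) w = 0"
proof -
  define v where "v = (w^2 - R^2) / (2 * R)"
  have v: "2 * R * v = w^2 - R^2" using assms by (simp add: v_def)
  have "snd (snd (quartic_param R s c \<sigma> w)) = 1/2 \<longleftrightarrow> (2 * R)^2 * (v^2 - (w * s - v * c)^2) = 0"
    unfolding quartic_param_via_v[OF assms v] using assms by (auto simp: field_simps)
  also have "(2 * R)^2 * (v^2 - (w * s - v * c)^2) = level_quadratic R s (1 + c) w * level_quadratic R (- s) (1 - c) w"
    unfolding level_quadratic_def using v by algebra
  finally show ?thesis .
qed

lemma tris_P_L_L_iff:
  fixes R :: "'a::field_char_0"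
  assumes "R \<noteq> 0" and "s^2 + c^2 = 1"
  shows "tris_P s c x y z = 0 \<and> tris_L R s c 1 x y = 0 \<and> tris_L R s c (-1) x y = 0 \<longleftrightarrow>
    (x, y, z) \<in> {(R * c, R * s, (1 - R^2 * s^2) / 2), (-R * c, -R * s, (1 - R^2 * s^2) / 2)}"
proof -
  define u v where "u = x * c + y * s" and "v = x * s - y * c"
  have xy: "x = u * c + v * s" "y = u * s - v * c"
    using assms(2) unfolding u_def v_def by algebra+
  have "tris_L R s c 1 x y = 0 \<and> tris_L R s c (-1) x y = 0 \<longleftrightarrow> v = 0 \<and> u^2 = R^2"
    using assms(1) unfolding tris_L_def u_def[symmetric] v_def[symmetric] by auto
  moreover have "tris_P s c x y z = 0 \<longleftrightarrow> 2 * z = 1 - y^2 + v^2"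
    unfolding tris_P_def v_def by (auto simp: algebra_simps)
  moreover have "v = 0 \<and> u^2 = R^2 \<and> 2 * z = 1 - y^2 + v^2 \<longleftrightarrow>
      (x, y, z) \<in> {(R * c, R * s, (1 - R^2 * s^2) / 2), (-R * c, -R * s, (1 - R^2 * s^2) / 2)}"
  proof
    assume "v = 0 \<and> u^2 = R^2 \<and> 2 * z = 1 - y^2 + v^2"
    then show "(x, y, z) \<in> {(R * c, R * s, (1 - R^2 * s^2) / 2), (-R * c, -R * s, (1 - R^2 * s^2) / 2)}"
      using xy by (auto simp: power2_eq_iff power_mult_distrib field_simps)
  next
    assume "(x, y, z) \<in> {(R * c, R * s, (1 - R^2 * s^2) / 2), (-R * c, -R * s, (1 - R^2 * s^2) / 2)}"
    then show "v = 0 \<and> u^2 = R^2 \<and> 2 * z = 1 - y^2 + v^2"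
      using assms(2) unfolding u_def v_def by (auto simp: power_mult_distrib) algebra+
  qed
  ultimately show ?thesis by blast
qed

section \<open>Evaluating trivariate polynomials\<close>

locale comm_ring_hom =
  fixes h :: "'a::comm_ring_1 \<Rightarrow> 'b::comm_ring_1"
  assumes hom_add: "h (a + b) = h a + h b"
    and hom_mult: "h (a * b) = h a * h b"
    and hom_one: "h 1 = 1"
begin

lemma hom_zero: "h 0 = 0"
  using hom_add[of 0 0] by simp

lemma hom_diff: "h (a - b) = h a - h b"
  using hom_add[of "a - b" b] by (simp add: algebra_simps)

lemma hom_power: "h (a ^ n) = h a ^ n"
  by (induction n) (simp_all add: hom_one hom_mult)

lemma hom_of_nat: "h (of_nat n) = of_nat n"
  by (induction n) (simp_all add: hom_zero hom_one hom_add)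

lemma hom_numeral: "h (numeral n) = numeral n"
  using hom_of_nat[of "numeral n"] by simp

lemmas hom_simps = hom_add hom_mult hom_one hom_zero hom_diff hom_power hom_numeral

lemma map_poly_add: "map_poly h (p + q) = map_poly h p + map_poly h q"
  by (intro poly_eqI) (simp add: coeff_map_poly hom_zero hom_add)

lemma comm_ring_hom_poly_map_poly: "comm_ring_hom (\<lambda>p. poly (map_poly h p) x)"
proof
  show "poly (map_poly h (p + q)) x = poly (map_poly h p) x + poly (map_poly h q) x" for p q
    by (simp add: map_poly_add)
  show "poly (map_poly h (p * q)) x = poly (map_poly h p) x * poly (map_poly h q) x" for p q
  proof (induction p)
    case (pCons a p)
    have "pCons a p * q = smult a q + pCons 0 (p * q)" by simp
    then show ?case using pCons
      by (simp add: map_poly_add map_poly_smult map_poly_pCons hom_zero hom_mult algebra_simps)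
  qed (simp add: hom_zero)
  show "poly (map_poly h 1) x = 1" by (simp add: hom_one)
qed

lemma tris_P_hom: "h (tris_P s c x y z) = tris_P (h s) (h c) (h x) (h y) (h z)"
  by (simp add: tris_P_def hom_simps)

lemma tris_Q_hom: "h (tris_Q R x y z) = tris_Q (h R) (h x) (h y) (h z)"
  by (simp add: tris_Q_def hom_simps)

lemma tris_L_hom: "h (tris_L R s c \<sigma> x y) = tris_L (h R) (h s) (h c) (h \<sigma>) (h x) (h y)"
  by (simp add: tris_L_def hom_simps)

end

lemma comm_ring_hom_of_real: "comm_ring_hom (of_real :: real \<Rightarrow> 'a::{real_algebra_1,comm_ring_1})"
  by standard simp_all

lemma comm_ring_hom_eval3: "comm_ring_hom (\<lambda>p. eval3 p (x, y, z))"
  unfolding eval3_def prod.case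
  by (intro comm_ring_hom.comm_ring_hom_poly_map_poly comm_ring_hom_of_real)

definition const3 :: "real \<Rightarrow> real poly poly poly" where
  "const3 r = [:[:[:r:]:]:]"

definition var_x :: "real poly poly poly" where "var_x = [:0, 1:]"
definition var_y :: "real poly poly poly" where "var_y = [:[:0, 1:]:]"
definition var_z :: "real poly poly poly" where "var_z = [:[:[:0, 1:]:]:]"

lemma eval3_const3 [simp]: "eval3 (const3 r) (x, y, z) = of_real r"
  and eval3_var_x [simp]: "eval3 var_x (x, y, z) = x"
  and eval3_var_y [simp]: "eval3 var_y (x, y, z) = y"
  and eval3_var_z [simp]: "eval3 var_z (x, y, z) = z"
  by (simp_all add: eval3_def const3_def var_x_def var_y_def var_z_def map_poly_pCons)

lemma algebraic_set3_two_equations: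
  "algebraic_set3 {(x, y, z). eval3 f (x, y, z) = 0 \<and> eval3 g (x, y, z) = 0}"
  unfolding algebraic_set3_def by (rule exI[of _ "{f, g}"]) auto

lemma algebraic_set3_PL:
  "algebraic_set3 {(x, y, z). tris_P (of_real s) (of_real c) x y z = 0
      \<and> tris_L (of_real R) (of_real s) (of_real c) (of_real \<sigma>) x y = 0}"
  using algebraic_set3_two_equations[of "tris_P (const3 s) (const3 c) var_x var_y var_z"
      "tris_L (const3 R) (const3 s) (const3 c) (const3 \<sigma>) var_x var_y"]
  by (simp add: comm_ring_hom.tris_P_hom[OF comm_ring_hom_eval3] comm_ring_hom.tris_L_hom[OF comm_ring_hom_eval3])

lemma algebraic_set3_trisector_C: "algebraic_set3 (trisector_C R s c)"
  using algebraic_set3_two_equations[of "tris_P (const3 s) (const3 c) var_x var_y var_z"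
      "tris_Q (const3 R) var_x var_y var_z"]
  by (simp add: trisector_C_def comm_ring_hom.tris_P_hom[OF comm_ring_hom_eval3] comm_ring_hom.tris_Q_hom[OF comm_ring_hom_eval3])

section \<open>Polynomial space curves\<close>

definition poly_curve :: "'a::comm_semiring_0 poly \<Rightarrow> 'a poly \<Rightarrow> 'a poly \<Rightarrow> 'a \<Rightarrow> 'a \<times> 'a \<times> 'a" where
  "poly_curve p q r w = (poly p w, poly q w, poly r w)"

lemma quartic_param_poly_curve:
  fixes R :: "'a::field_char_0"
  shows "\<exists>p q r. degree p \<le> 4 \<and> degree q \<le> 4 \<and> degree r \<le> 4
    \<and> quartic_param R s c \<sigma> = poly_curve p q r"
proof -
  define V where "V = smult (1 / (2 * R)) [: -(R^2), 0, 1 :]"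
  define X where "X = smult c [:0, 1:] + smult s V"
  define Y where "Y = smult s [:0, 1:] - smult c V"
  have "degree V \<le> 2" by (simp add: V_def)
  then have "degree X \<le> 2" "degree Y \<le> 2"
    unfolding X_def Y_def by (auto intro!: degree_add_le degree_diff_le order.trans[OF degree_smult_le])
  then have "degree (smult \<sigma> X) \<le> 4" "degree (smult \<sigma> Y) \<le> 4"
    "degree (smult (1/2) (1 - Y^2 + V^2)) \<le> 4"
    using \<open>degree V \<le> 2\<close> 
    by (auto intro!: degree_add_le degree_diff_le order.trans[OF degree_smult_le] order.trans[OF degree_power_le])
  moreover
  have pV: "poly V w = (w^2 - R^2) / (2 * R)" for w
    by (simp add: V_def power2_eq_square diff_divide_distrib)
  have "poly X w = w * c + poly V w * s" "poly Y w = w * s - poly V w * c" for w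
    by (simp_all add: X_def Y_def mult.commute)
  then have "quartic_param R s c \<sigma> = poly_curve (smult \<sigma> X) (smult \<sigma> Y) (smult (1/2) (1 - Y^2 + V^2))"
    by (simp add: fun_eq_iff quartic_param_def poly_curve_def pV Let_def)
  ultimately show ?thesis by blast
qed

lemma poly_curve_Int_cplane:
  fixes p q r :: "complex poly"
  assumes "cplane H" and "degree p \<le> n" "degree q \<le> n" "degree r \<le> n"
    and "\<not> range (poly_curve p q r) \<subseteq> H"
  shows "finite (range (poly_curve p q r) \<inter> H) \<and> card (range (poly_curve p q r) \<inter> H) \<le> n"
proof -
  obtain a b c d where H: "H = {(x, y, z). a * x + b * y + c * z = d}"
    using assms(1) unfolding cplane_def by blast
  define f where "f = smult a p + smult b q + smult c r - [:d:]"
  have preimage: "range (poly_curve p q r) \<inter> H = poly_curve p q r ` {w. poly f w = 0}"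
    by (auto simp: H f_def poly_curve_def)
  have "f \<noteq> 0"
  proof
    assume "f = 0"
    then have "range (poly_curve p q r) \<inter> H = range (poly_curve p q r)"
      unfolding preimage by simp
    then show False using assms(5) by blast
  qed
  have "degree f \<le> n"
    unfolding f_def using assms(2-4)
    by (auto intro!: degree_add_le degree_diff_le order.trans[OF degree_smult_le])
  have "card (poly_curve p q r ` {w. poly f w = 0}) \<le> card {w. poly f w = 0}"
    using poly_roots_finite[OF \<open>f \<noteq> 0\<close>] by (rule card_image_le)
  also have "\<dots> \<le> n"
    using card_poly_roots_bound[OF \<open>f \<noteq> 0\<close>] \<open>degree f \<le> n\<close> by linarith
  finally show ?thesis
    unfolding preimage using poly_roots_finite[OF \<open>f \<noteq> 0\<close>] by simp
qed

lemma card_poly_curve_Int_cplane_le: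
  fixes p q r :: "complex poly"
  assumes "inj (poly_curve p q r)" and "cplane H" and "degree p \<le> n" "degree q \<le> n" "degree r \<le> n"
    and "finite (range (poly_curve p q r) \<inter> H)"
  shows "card (range (poly_curve p q r) \<inter> H) \<le> n"
proof -
  have "\<not> range (poly_curve p q r) \<subseteq> H"
    using assms(1,6) finite_imageD infinite_UNIV_char_0 by (metis inf.absorb1)
  then show ?thesis using poly_curve_Int_cplane assms(2-5) by blast
qed

lemma islimpt_range_poly_curve:
  fixes p q r :: "complex poly"
  assumes "inj (poly_curve p q r)"
  shows "poly_curve p q r w islimpt range (poly_curve p q r)"
proof (unfold islimpt_approachable, intro allI impI)
  fix e :: real assume "e > 0"
  have "isCont (poly_curve p q r) w"
    unfolding poly_curve_def by (intro continuous_intros)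
  then obtain d where "d > 0" and d: "\<And>w'. dist w' w < d \<Longrightarrow> dist (poly_curve p q r w') (poly_curve p q r w) < e"
    using \<open>e > 0\<close> unfolding continuous_at_eps_delta by blast
  let ?w' = "w + of_real (d / 2)"
  have "dist ?w' w < d" "?w' \<noteq> w" using \<open>d > 0\<close> by (simp_all add: dist_norm)
  then show "\<exists>x'\<in>range (poly_curve p q r). x' \<noteq> poly_curve p q r w \<and> dist x' (poly_curve p q r w) < e"
    using d assms by (metis inj_eq rangeI)
qed

lemma poly_curve_has_vector_derivative:
  fixes p q r :: "real poly"
  shows "(poly_curve p q r has_vector_derivative poly_curve (pderiv p) (pderiv q) (pderiv r) t) (at t)"
  unfolding poly_curve_def
  by (intro has_vector_derivative_Pair)
     (simp_all add: has_real_derivative_iff_has_vector_derivative[symmetric])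

lemma smooth_curve_on_poly_curve:
  fixes p q r :: "real poly"
  shows "smooth_curve_on I (poly_curve p q r)"
  unfolding smooth_curve_on_def
  by (rule exI[of _ "\<lambda>n. poly_curve ((pderiv^^n) p) ((pderiv^^n) q) ((pderiv^^n) r)"])
     (simp add: poly_curve_has_vector_derivative)

lemma linear_vector_derivative:
  fixes L :: "'a::real_normed_vector \<Rightarrow> real"
  assumes "bounded_linear L" and "(g has_vector_derivative g') (at t)"
    and "((\<lambda>\<tau>. L (g \<tau>)) has_real_derivative D) (at t)"
  shows "L g' = D"
proof -
  have "((\<lambda>\<tau>. L (g \<tau>)) has_real_derivative L g') (at t)"
    using bounded_linear.has_vector_derivative[OF assms(1,2)]
    by (simp add: has_real_derivative_iff_has_vector_derivative)
  then show ?thesis using assms(3) by (rule DERIV_unique)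
qed

lemma smooth_branch_poly_curve:
  fixes p q r :: "real poly" and L :: "real \<times> real \<times> real \<Rightarrow> real"
  assumes "bounded_linear L" and "\<And>\<tau>. L (poly_curve p q r \<tau>) = a * \<tau> + b" and "a \<noteq> 0" and "e > 0"
  shows "smooth_branch e (poly_curve p q r) (poly_curve p q r 0)"
  unfolding smooth_branch_def
proof (intro conjI ballI)
  let ?g = "poly_curve p q r" and ?I = "{-e<..<e}"
  show "inj_on ?g ?I"
    by (rule inj_onI) (metis assms(2,3) add_right_cancel mult_cancel_left)
  have inverse: "(L x - b) / a = inv_into ?I ?g x" if hx: "x \<in> ?g ` ?I" for x
  proof -
    obtain \<tau> where "\<tau> \<in> ?I" and x: "x = ?g \<tau>" using hx by blast
    then have "inv_into ?I ?g x = \<tau>" using \<open>inj_on ?g ?I\<close> by (simp add: inv_into_f_f)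
    also have "\<tau> = (L x - b) / a" using assms(2,3) by (simp add: x)
    finally show ?thesis by simp
  qed
  have "continuous_on (?g ` ?I) (\<lambda>x. (L x - b) / a)"
    using assms(1,3) by (auto intro!: continuous_intros simp: linear_continuous_on)
  then show "continuous_on (?g ` ?I) (inv_into ?I ?g)"
    by (rule continuous_on_eq) (rule inverse)
  fix t
  have "((\<lambda>\<tau>. L (?g \<tau>)) has_real_derivative a) (at t)"
    unfolding assms(2) by (auto intro!: derivative_eq_intros)
  then have "L (vector_derivative ?g (at t)) = a"
    using linear_vector_derivative[OF assms(1)] poly_curve_has_vector_derivative vector_derivative_at by metis
  then show "vector_derivative ?g (at t) \<noteq> 0"
    using assms(3) linear_0[OF bounded_linear.linear[OF assms(1)]] by force
qed (simp_all add: assms(4) smooth_curve_on_poly_curve)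

section \<open>The two quartic components\<close>

lemma level_quadratic_distinct_roots:
  fixes R s a :: real
  assumes "a \<noteq> 0" and "R \<noteq> 0"
  obtains x y where "x \<noteq> y" "level_quadratic R s a x = 0" "level_quadratic R s a y = 0"
proof -
  have "discrim a (- 2 * R * s) (- a * R^2) = 4 * R^2 * (s^2 + a^2)"
    by (simp add: discrim_def power2_eq_square algebra_simps)
  also have "\<dots> > 0" using assms by (simp add: add_nonneg_pos)
  finally obtain x y where "x \<noteq> y" "a * x^2 + (- 2 * R * s) * x + (- a * R^2) = 0"
    "a * y^2 + (- 2 * R * s) * y + (- a * R^2) = 0"
    using discriminant_pos_ex[OF assms(1)] by blast
  then show ?thesis using that by (simp add: level_quadratic_def)
qed

definition level_plane :: "cpt3 set" where
  "level_plane = {(x, y, z). z = 1/2}"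

lemma cplane_level_plane: "cplane level_plane"
  unfolding cplane_def level_plane_def by (intro exI[of _ 0] exI[of _ 0] exI[of _ 1] exI[of _ "1/2"]) auto

(* The direction (c, s) of the line only has to be a unit vector off the x-axis; the rational
   parametrization by t enters only in the final theorem. *)
locale trisector_k1 =
  fixes R s c :: real
  assumes R_nonzero: "R \<noteq> 0" and unit_direction: "s^2 + c^2 = 1" and s_nonzero: "s \<noteq> 0"
begin

lemma unit_direction_C: "(complex_of_real s)^2 + (complex_of_real c)^2 = 1"
  by (metis of_real_1 of_real_add of_real_power unit_direction)

lemma of_real_sign_squared: "\<sigma> \<in> {1, -1} \<Longrightarrow> (of_real \<sigma> :: 'a::real_algebra_1)^2 = 1"
  by auto

definition component :: "real \<Rightarrow> cpt3 set" where
  "component \<sigma> = {(x, y, z). tris_P (of_real s) (of_real c) x y z = 0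
      \<and> tris_L (of_real R) (of_real s) (of_real c) (of_real \<sigma>) x y = 0}"

abbreviation cparam :: "real \<Rightarrow> complex \<Rightarrow> cpt3" where
  "cparam \<sigma> \<equiv> quartic_param (of_real R) (of_real s) (of_real c) (of_real \<sigma>)"

lemma cparam_eq_iff:
  assumes "\<sigma> \<in> {1, -1}"
  shows "(x, y, z) = cparam \<sigma> w \<longleftrightarrow>
    (x, y, z) \<in> component \<sigma> \<and> of_real \<sigma> * (x * of_real c + y * of_real s) = w"
proof -
  have "complex_of_real R \<noteq> 0" using R_nonzero by simp
  from quartic_param_eq_iff[OF this unit_direction_C of_real_sign_squared[OF assms]] show ?thesis
    unfolding component_def by simp
qed

lemma component_eq_range:
  assumes "\<sigma> \<in> {1, -1}"
  shows "component \<sigma> = range (cparam \<sigma>)"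
proof (intro set_eqI iffI)
  fix q assume "q \<in> component \<sigma>"
  moreover obtain x y z where q: "q = (x, y, z)" by (cases q)
  ultimately have "q = cparam \<sigma> (of_real \<sigma> * (x * of_real c + y * of_real s))"
    using cparam_eq_iff[OF assms] by blast
  then show "q \<in> range (cparam \<sigma>)" by blast
next
  fix q assume "q \<in> range (cparam \<sigma>)"
  then obtain w where w: "cparam \<sigma> w = q" by blast
  obtain x y z where q: "q = (x, y, z)" by (cases q)
  show "q \<in> component \<sigma>" using cparam_eq_iff[OF assms, of x y z w] w q by simp
qed

lemma inj_cparam:
  assumes "\<sigma> \<in> {1, -1}"
  shows "inj (cparam \<sigma>)"
proof (rule injI)
  fix w w' assume eq: "cparam \<sigma> w = cparam \<sigma> w'"
  obtain x y z where xyz: "(x, y, z) = cparam \<sigma> w" by (metis prod_cases3)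
  then show "w = w'" using eq cparam_eq_iff[OF assms, of x y z] by metis
qed

lemma component_poly_curve:
  assumes "\<sigma> \<in> {1, -1}"
  obtains p q r where "degree p \<le> 4" "degree q \<le> 4" "degree r \<le> 4"
    "inj (poly_curve p q r)" "component \<sigma> = range (poly_curve p q r)"
proof -
  obtain p q r where "degree p \<le> 4" "degree q \<le> 4" "degree r \<le> 4" and pc: "cparam \<sigma> = poly_curve p q r"
    using quartic_param_poly_curve by blast
  with that show ?thesis using inj_cparam[OF assms] component_eq_range[OF assms] by simp
qed

lemma trisector_C_eq_Un: "trisector_C R s c = component 1 \<union> component (-1)"
proof (intro set_eqI)
  fix q :: cpt3
  obtain x y z where q: "q = (x, y, z)" by (cases q)
  show "q \<in> trisector_C R s c \<longleftrightarrow> q \<in> component 1 \<union> component (-1)"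
    using trisector_iff_components[OF unit_direction_C, of x y z "of_real R"]
    by (auto simp: q trisector_C_def component_def)
qed

lemma algebraic_set3_component: "algebraic_set3 (component \<sigma>)"
  unfolding component_def by (rule algebraic_set3_PL)

lemma component_Int_component:
  "component 1 \<inter> component (-1) =
    cpt_of_real ` {(R * c, R * s, (1 - R^2 * s^2) / 2), (-R * c, -R * s, (1 - R^2 * s^2) / 2)}"
proof (intro set_eqI)
  fix q :: cpt3
  obtain x y z where q: "q = (x, y, z)" by (cases q)
  have R: "complex_of_real R \<noteq> 0" using R_nonzero by simp
  have "q \<in> component 1 \<inter> component (-1) \<longleftrightarrow>
      tris_P (of_real s) (of_real c) x y z = 0 \<and> tris_L (of_real R) (of_real s) (of_real c) 1 x y = 0
      \<and> tris_L (of_real R) (of_real s) (of_real c) (-1) x y = 0"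
    by (auto simp: q component_def)
  also have "\<dots> \<longleftrightarrow> q \<in> cpt_of_real ` {(R * c, R * s, (1 - R^2 * s^2) / 2), (-R * c, -R * s, (1 - R^2 * s^2) / 2)}"
    unfolding tris_P_L_L_iff[OF R unit_direction_C] by (auto simp: q cpt_of_real_def)
  finally show "q \<in> component 1 \<inter> component (-1) \<longleftrightarrow> q \<in> cpt_of_real ` {(R * c, R * s, (1 - R^2 * s^2) / 2), (-R * c, -R * s, (1 - R^2 * s^2) / 2)}" .
qed

definition u_plane :: "complex \<Rightarrow> cpt3 set" where
  "u_plane d = {(x, y, z). of_real c * x + of_real s * y = d}"

lemma cplane_u_plane: "cplane (u_plane d)"
  unfolding cplane_def u_plane_def using s_nonzero
  by (intro exI[of _ "of_real c"] exI[of _ "of_real s"] exI[of _ 0] exI[of _ d]) auto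

lemma finite_component_Int_u_plane:
  assumes "\<sigma> \<in> {1, -1}"
  shows "finite (component \<sigma> \<inter> u_plane d)"
proof (rule finite_subset)
  show "component \<sigma> \<inter> u_plane d \<subseteq> {cparam \<sigma> (of_real \<sigma> * d)}"
  proof
    fix q assume "q \<in> component \<sigma> \<inter> u_plane d"
    moreover obtain x y z where q: "q = (x, y, z)" by (cases q)
    ultimately have "(x, y, z) \<in> component \<sigma>" and "x * of_real c + y * of_real s = d"
      by (auto simp: u_plane_def mult.commute)
    then show "q \<in> {cparam \<sigma> (of_real \<sigma> * d)}"
      using cparam_eq_iff[OF assms, of x y z] by (simp add: q)
  qed
qed simp

lemma space_curve_component:
  assumes "\<sigma> \<in> {1, -1}"
  shows "space_curve (component \<sigma>)"
  unfolding space_curve_def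
proof (intro conjI ballI)
  obtain p q r where "degree p \<le> 4" "degree q \<le> 4" "degree r \<le> 4"
    and inj: "inj (poly_curve p q r)" and C: "component \<sigma> = range (poly_curve p q r)"
    by (rule component_poly_curve[OF assms])
  show "x islimpt component \<sigma>" if "x \<in> component \<sigma>" for x
  proof -
    from that have "x \<in> range (poly_curve p q r)" by (simp only: C)
    then obtain w where "x = poly_curve p q r w" by blast
    then show ?thesis unfolding C using islimpt_range_poly_curve[OF inj] by simp
  qed
  show "component \<sigma> \<noteq> {}" unfolding C by simp
  show "\<exists>H. cplane H \<and> x \<in> H \<and> finite (component \<sigma> \<inter> H)" for x
  proof -
    obtain a b e where x: "x = (a, b, e)" by (cases x)
    have "x \<in> u_plane (of_real c * a + of_real s * b)" by (simp add: u_plane_def x)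
    then show ?thesis using cplane_u_plane finite_component_Int_u_plane[OF assms] by blast
  qed
qed (rule algebraic_set3_component)

lemma level_plane_roots:
  obtains W :: "real set" where "card W = 4"
    "\<And>w. w \<in> W \<Longrightarrow> level_quadratic R s (1 + c) w * level_quadratic R (- s) (1 - c) w = 0"
proof -
  have "c \<noteq> -1" "c \<noteq> 1" using unit_direction s_nonzero by auto
  then have "1 + c \<noteq> 0" "1 - c \<noteq> 0" by (simp_all add: add_eq_0_iff)
  obtain w1 w2 where "w1 \<noteq> w2" and w12: "level_quadratic R s (1 + c) w1 = 0" "level_quadratic R s (1 + c) w2 = 0"
    using level_quadratic_distinct_roots[OF \<open>1 + c \<noteq> 0\<close> R_nonzero] by metis
  obtain w3 w4 where "w3 \<noteq> w4" and w34: "level_quadratic R (- s) (1 - c) w3 = 0" "level_quadratic R (- s) (1 - c) w4 = 0"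
    using level_quadratic_distinct_roots[OF \<open>1 - c \<noteq> 0\<close> R_nonzero] by metis
  have no_common_root: False
    if "level_quadratic R s (1 + c) w = 0" and "level_quadratic R (- s) (1 - c) w = 0" for w
  proof -
    have "w^2 = R^2" using that unfolding level_quadratic_def by algebra
    then have "R * s * w = 0" using that(1) unfolding level_quadratic_def by algebra
    then have "w = 0" using R_nonzero s_nonzero by simp
    then show False using \<open>w^2 = R^2\<close> R_nonzero by simp
  qed
  have "w1 \<noteq> w3" "w1 \<noteq> w4" "w2 \<noteq> w3" "w2 \<noteq> w4"
    using no_common_root w12 w34 by metis+
  then have "card {w1, w2, w3, w4} = 4"
    using \<open>w1 \<noteq> w2\<close> \<open>w3 \<noteq> w4\<close> by simp
  moreover have "level_quadratic R s (1 + c) w * level_quadratic R (- s) (1 - c) w = 0"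
    if "w \<in> {w1, w2, w3, w4}" for w
    using that w12 w34 by auto
  ultimately show ?thesis by (rule that)
qed

lemma node_mem_component:
  assumes "\<sigma> \<in> {1, -1}"
  shows "cpt_of_real (R * c, R * s, (1 - R^2 * s^2) / 2) \<in> component \<sigma>"
  using component_Int_component assms by auto

lemma node_notin_level_plane: "cpt_of_real (R * c, R * s, (1 - R^2 * s^2) / 2) \<notin> level_plane"
  using R_nonzero s_nonzero by (simp add: level_plane_def cpt_of_real_def)

lemma component_Int_level_plane:
  assumes "\<sigma> \<in> {1, -1}"
  shows "finite (component \<sigma> \<inter> level_plane) \<and> card (component \<sigma> \<inter> level_plane) = 4"
proof -
  obtain p q r where deg: "degree p \<le> 4" "degree q \<le> 4" "degree r \<le> 4"
    and C: "component \<sigma> = range (poly_curve p q r)"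
    by (rule component_poly_curve[OF assms])
  have "\<not> component \<sigma> \<subseteq> level_plane"
    using node_mem_component[OF assms] node_notin_level_plane by blast
  then have fin: "finite (component \<sigma> \<inter> level_plane)" and le: "card (component \<sigma> \<inter> level_plane) \<le> 4"
    using poly_curve_Int_cplane[OF cplane_level_plane deg] unfolding C by blast+
  obtain W where "card W = 4"
    and W: "\<And>w. w \<in> W \<Longrightarrow> level_quadratic R s (1 + c) w * level_quadratic R (- s) (1 - c) w = 0"
    using level_plane_roots by metis
  have "cparam \<sigma> (of_real w) \<in> level_plane" if "w \<in> W" for w
  proof -
    have R: "complex_of_real R \<noteq> 0" using R_nonzero by simp
    have "complex_of_real (level_quadratic R s (1 + c) w * level_quadratic R (- s) (1 - c) w) = 0"
      using W[OF that] by (simp only: of_real_0)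
    then have "snd (snd (cparam \<sigma> (of_real w))) = 1/2"
      unfolding quartic_param_z_eq_half_iff[OF R] by (simp add: level_quadratic_def)
    then show ?thesis by (auto simp: level_plane_def split: prod.splits)
  qed
  then have "cparam \<sigma> ` of_real ` W \<subseteq> component \<sigma> \<inter> level_plane"
    using component_eq_range[OF assms] by auto
  moreover have "card (cparam \<sigma> ` of_real ` W) = 4"
  proof -
    have "inj (complex_of_real)" by (rule injI) simp
    then show ?thesis using inj_cparam[OF assms] \<open>card W = 4\<close>
      by (simp add: card_image inj_on_subset)
  qed
  ultimately have "4 \<le> card (component \<sigma> \<inter> level_plane)"
    using card_mono[OF fin] by metis
  then show ?thesis using fin le by simp
qed

lemma space_curve_of_degree_component:
  assumes "\<sigma> \<in> {1, -1}"
  shows "space_curve_of_degree (component \<sigma>) 4"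
  unfolding space_curve_of_degree_def
proof (intro conjI allI impI)
  show "space_curve (component \<sigma>)" by (rule space_curve_component[OF assms])
  obtain p q r where deg: "degree p \<le> 4" "degree q \<le> 4" "degree r \<le> 4"
    and inj: "inj (poly_curve p q r)" and C: "component \<sigma> = range (poly_curve p q r)"
    by (rule component_poly_curve[OF assms])
  show "card (component \<sigma> \<inter> H) \<le> 4" if "cplane H \<and> finite (component \<sigma> \<inter> H)" for H
    using that card_poly_curve_Int_cplane_le[OF inj _ deg] unfolding C by blast
  show "\<exists>H. cplane H \<and> finite (component \<sigma> \<inter> H) \<and> card (component \<sigma> \<inter> H) = 4"
    using cplane_level_plane component_Int_level_plane[OF assms] by blast
qed

lemma space_curve_trisector_C: "space_curve (trisector_C R s c)"
  unfolding space_curve_def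
proof (intro conjI ballI)
  have C: "component \<sigma> \<noteq> {}" "\<forall>x\<in>component \<sigma>. x islimpt component \<sigma>" if "\<sigma> \<in> {1, -1}" for \<sigma>
    using space_curve_component[OF that] unfolding space_curve_def by blast+
  show "trisector_C R s c \<noteq> {}"
    using C(1)[of 1] by (simp add: trisector_C_eq_Un)
  show "x islimpt trisector_C R s c" if "x \<in> trisector_C R s c" for x
    using that C(2)[of 1] C(2)[of "-1"] by (auto simp: trisector_C_eq_Un islimpt_Un)
  show "\<exists>H. cplane H \<and> x \<in> H \<and> finite (trisector_C R s c \<inter> H)" for x
  proof -
    obtain a b e where x: "x = (a, b, e)" by (cases x)
    have "x \<in> u_plane (of_real c * a + of_real s * b)" by (simp add: u_plane_def x)
    moreover have "finite (trisector_C R s c \<inter> u_plane d)" for d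
      using finite_component_Int_u_plane[of 1 d] finite_component_Int_u_plane[of "-1" d]
      by (simp add: trisector_C_eq_Un Int_Un_distrib2)
    ultimately show ?thesis using cplane_u_plane by blast
  qed
qed (rule algebraic_set3_trisector_C)

lemma space_curve_of_degree_trisector_C: "space_curve_of_degree (trisector_C R s c) 8"
  unfolding space_curve_of_degree_def
proof (intro conjI allI impI)
  show "space_curve (trisector_C R s c)" by (rule space_curve_trisector_C)
  fix H assume H: "cplane H \<and> finite (trisector_C R s c \<inter> H)"
  have bound: "card (component \<sigma> \<inter> H) \<le> 4" if "\<sigma> \<in> {1, -1}" for \<sigma>
  proof -
    have "component \<sigma> \<inter> H \<subseteq> trisector_C R s c \<inter> H"
      using that unfolding trisector_C_eq_Un by blast
    then have "finite (component \<sigma> \<inter> H)" using H finite_subset by blast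
    then show ?thesis
      using H space_curve_of_degree_component[OF that] unfolding space_curve_of_degree_def by blast
  qed
  have "card (trisector_C R s c \<inter> H) \<le> card (component 1 \<inter> H) + card (component (-1) \<inter> H)"
    unfolding trisector_C_eq_Un Int_Un_distrib2 by (rule card_Un_le)
  also have "\<dots> \<le> 8" using bound[of 1] bound[of "-1"] by simp
  finally show "card (trisector_C R s c \<inter> H) \<le> 8" .
next
  have "cpt_of_real (a, b, (1 - R^2 * s^2) / 2) \<notin> level_plane" for a b
    using R_nonzero s_nonzero by (simp add: level_plane_def cpt_of_real_def)
  then have "(component 1 \<inter> component (-1)) \<inter> level_plane = {}"
    unfolding component_Int_component by blast
  then have "(component 1 \<inter> level_plane) \<inter> (component (-1) \<inter> level_plane) = {}"
    by blast
  then have "finite (trisector_C R s c \<inter> level_plane) \<and> card (trisector_C R s c \<inter> level_plane) = 8"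
    unfolding trisector_C_eq_Un Int_Un_distrib2
    using component_Int_level_plane[of 1] component_Int_level_plane[of "-1"] by (simp add: card_Un_disjoint)
  then show "\<exists>H. cplane H \<and> finite (trisector_C R s c \<inter> H) \<and> card (trisector_C R s c \<inter> H) = 8"
    using cplane_level_plane by blast
qed

lemma real_points_component_Int:
  "{p. cpt_of_real p \<in> component 1 \<inter> component (-1)}
     = {(R * c, R * s, (1 - R^2 * s^2) / 2), (-R * c, -R * s, (1 - R^2 * s^2) / 2)}"
proof -
  have "inj cpt_of_real" by (rule injI) (auto simp: cpt_of_real_def split: prod.splits)
  then show ?thesis
    unfolding component_Int_component by (simp only: inj_image_mem_iff Collect_mem_eq)
qed

section \<open>The real nodes\<close>

definition u_coord :: "pt3 \<Rightarrow> real" where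
  "u_coord p = fst p * c + fst (snd p) * s"

definition v_coord :: "pt3 \<Rightarrow> real" where
  "v_coord p = fst p * s - fst (snd p) * c"

lemma bounded_linear_u_coord: "bounded_linear u_coord"
  and bounded_linear_v_coord: "bounded_linear v_coord"
  unfolding u_coord_def v_coord_def
  by (intro bounded_linear_intros)+

lemma real_trisector_iff:
  "p \<in> trisector R s c \<longleftrightarrow> (\<exists>\<sigma>\<in>{1, -1}. p = quartic_param R s c \<sigma> (\<sigma> * u_coord p))"
proof -
  obtain x y z where p: "p = (x, y, z)" by (cases p)
  have "p \<in> trisector R s c \<longleftrightarrow> (\<exists>\<sigma>\<in>{1, -1}. tris_P s c x y z = 0 \<and> tris_L R s c \<sigma> x y = 0)"
    using trisector_iff_components[OF unit_direction] by (auto simp: p trisector_def)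
  also have "\<dots> \<longleftrightarrow> (\<exists>\<sigma>\<in>{1, -1}. p = quartic_param R s c \<sigma> (\<sigma> * u_coord p))"
    using quartic_param_eq_iff[OF R_nonzero unit_direction of_real_sign_squared] by (auto simp: p u_coord_def)
  finally show ?thesis .
qed

definition branch :: "real \<Rightarrow> real \<Rightarrow> real \<Rightarrow> pt3" where
  "branch \<sigma> u\<^sub>0 \<tau> = quartic_param R s c \<sigma> (\<sigma> * u\<^sub>0 + \<tau>)"

lemma branch_poly_curve:
  obtains p q r where "branch \<sigma> u\<^sub>0 = poly_curve p q r"
proof -
  obtain p q r where "quartic_param R s c \<sigma> = poly_curve p q r"
    using quartic_param_poly_curve by blast
  then have "branch \<sigma> u\<^sub>0 = poly_curve (p \<circ>\<^sub>p [:\<sigma> * u\<^sub>0, 1:]) (q \<circ>\<^sub>p [:\<sigma> * u\<^sub>0, 1:]) (r \<circ>\<^sub>p [:\<sigma> * u\<^sub>0, 1:])"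
    by (simp add: fun_eq_iff branch_def poly_curve_def poly_pcompose)
  then show ?thesis by (rule that)
qed

lemma u_coord_quartic_param: "u_coord (quartic_param R s c \<sigma> w) = \<sigma> * w"
  and v_coord_quartic_param: "v_coord (quartic_param R s c \<sigma> w) = \<sigma> * ((w^2 - R^2) / (2 * R))"
proof -
  obtain x y z where xyz: "quartic_param R s c \<sigma> w = (x, y, z)" by (metis prod_cases3)
  show "u_coord (quartic_param R s c \<sigma> w) = \<sigma> * w"
    "v_coord (quartic_param R s c \<sigma> w) = \<sigma> * ((w^2 - R^2) / (2 * R))"
    using quartic_param_rotated[OF R_nonzero unit_direction xyz] by (simp_all add: u_coord_def v_coord_def xyz)
qed

lemma u_coord_branch: "\<sigma> \<in> {1, -1} \<Longrightarrow> u_coord (branch \<sigma> u\<^sub>0 \<tau>) = \<sigma> * \<tau> + u\<^sub>0"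
  by (auto simp: branch_def u_coord_quartic_param)

lemma branch_mem_trisector: "\<sigma> \<in> {1, -1} \<Longrightarrow> branch \<sigma> u\<^sub>0 \<tau> \<in> trisector R s c"
  unfolding real_trisector_iff u_coord_branch by (auto simp: branch_def algebra_simps)

lemma branch_at_0:
  assumes "\<sigma> \<in> {1, -1}" and "u\<^sub>0^2 = R^2"
  shows "branch \<sigma> u\<^sub>0 0 = (u\<^sub>0 * c, u\<^sub>0 * s, (1 - R^2 * s^2) / 2)"
proof -
  have "2 * R * 0 = (\<sigma> * u\<^sub>0)^2 - R^2" using assms by (auto simp: power_mult_distrib)
  from quartic_param_via_v[OF R_nonzero this] show ?thesis
    using assms by (auto simp: branch_def power_mult_distrib)
qed

lemma smooth_branch_branch:
  assumes "\<sigma> \<in> {1, -1}" and "u\<^sub>0^2 = R^2"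
  shows "smooth_branch 1 (branch \<sigma> u\<^sub>0) (u\<^sub>0 * c, u\<^sub>0 * s, (1 - R^2 * s^2) / 2)"
proof -
  obtain p q r where pc: "branch \<sigma> u\<^sub>0 = poly_curve p q r" by (rule branch_poly_curve)
  have "\<sigma> \<noteq> 0" using assms(1) by auto
  have "u_coord (poly_curve p q r \<tau>) = \<sigma> * \<tau> + u\<^sub>0" for \<tau>
    using u_coord_branch[OF assms(1)] by (simp add: pc[symmetric])
  from smooth_branch_poly_curve[OF bounded_linear_u_coord this \<open>\<sigma> \<noteq> 0\<close>, of 1]
  show ?thesis using branch_at_0[OF assms] by (simp add: pc)
qed

lemma branch_tangent:
  assumes "\<sigma> \<in> {1, -1}"
  shows "u_coord (vector_derivative (branch \<sigma> u\<^sub>0) (at 0)) = \<sigma>"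
    and "v_coord (vector_derivative (branch \<sigma> u\<^sub>0) (at 0)) = u\<^sub>0 / R"
proof -
  obtain p q r where pc: "branch \<sigma> u\<^sub>0 = poly_curve p q r" by (rule branch_poly_curve)
  have D: "(branch \<sigma> u\<^sub>0 has_vector_derivative vector_derivative (branch \<sigma> u\<^sub>0) (at 0)) (at 0)"
    unfolding pc using poly_curve_has_vector_derivative vector_derivative_at by metis
  have "((\<lambda>\<tau>. u_coord (branch \<sigma> u\<^sub>0 \<tau>)) has_real_derivative \<sigma>) (at 0)"
    unfolding u_coord_branch[OF assms] by (auto intro!: derivative_eq_intros)
  then show "u_coord (vector_derivative (branch \<sigma> u\<^sub>0) (at 0)) = \<sigma>"
    by (rule linear_vector_derivative[OF bounded_linear_u_coord D])
  have "((\<lambda>\<tau>. v_coord (branch \<sigma> u\<^sub>0 \<tau>)) has_real_derivative \<sigma> * (2 * (\<sigma> * u\<^sub>0) / (2 * R))) (at 0)"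
    unfolding branch_def v_coord_quartic_param using R_nonzero by (auto intro!: derivative_eq_intros simp: power2_eq_square field_simps)
  then have "v_coord (vector_derivative (branch \<sigma> u\<^sub>0) (at 0)) = \<sigma> * (2 * (\<sigma> * u\<^sub>0) / (2 * R))"
    by (rule linear_vector_derivative[OF bounded_linear_v_coord D])
  also have "\<dots> = u\<^sub>0 / R" using assms R_nonzero by auto
  finally show "v_coord (vector_derivative (branch \<sigma> u\<^sub>0) (at 0)) = u\<^sub>0 / R" .
qed

lemma branch_tangents_independent:
  assumes "u\<^sub>0 \<noteq> 0"
  shows "vector_derivative (branch (-1) u\<^sub>0) (at 0) \<noteq> a *\<^sub>R vector_derivative (branch 1 u\<^sub>0) (at 0)"
proof
  assume eq: "vector_derivative (branch (-1) u\<^sub>0) (at 0) = a *\<^sub>R vector_derivative (branch 1 u\<^sub>0) (at 0)"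
  have "-1 = a * 1" "u\<^sub>0 / R = a * (u\<^sub>0 / R)"
    using arg_cong[OF eq, of u_coord] arg_cong[OF eq, of v_coord] branch_tangent[of 1 u\<^sub>0] branch_tangent[of "-1" u\<^sub>0]
      linear_scale[OF bounded_linear.linear[OF bounded_linear_u_coord]]
      linear_scale[OF bounded_linear.linear[OF bounded_linear_v_coord]]
    by simp_all
  then show False using assms R_nonzero by simp
qed

lemma trisector_Int_slab:
  "trisector R s c \<inter> {p. \<bar>u_coord p - u\<^sub>0\<bar> < 1} = branch 1 u\<^sub>0 ` {-1<..<1} \<union> branch (-1) u\<^sub>0 ` {-1<..<1}"
proof (intro set_eqI iffI)
  fix p assume "p \<in> trisector R s c \<inter> {p. \<bar>u_coord p - u\<^sub>0\<bar> < 1}"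
  then have "p \<in> trisector R s c" and slab: "\<bar>u_coord p - u\<^sub>0\<bar> < 1" by simp_all
  then obtain \<sigma> where \<sigma>: "\<sigma> \<in> {1, -1}" and p: "p = quartic_param R s c \<sigma> (\<sigma> * u_coord p)"
    unfolding real_trisector_iff by blast
  define \<tau> where "\<tau> = \<sigma> * (u_coord p - u\<^sub>0)"
  have "\<sigma> * u_coord p = \<sigma> * u\<^sub>0 + \<tau>"
    using \<sigma> by (auto simp: \<tau>_def algebra_simps)
  with p have "p = branch \<sigma> u\<^sub>0 \<tau>"
    unfolding branch_def by metis
  moreover have "\<tau> \<in> {-1<..<1}"
    using slab \<sigma> by (auto simp: \<tau>_def abs_less_iff)
  ultimately show "p \<in> branch 1 u\<^sub>0 ` {-1<..<1} \<union> branch (-1) u\<^sub>0 ` {-1<..<1}"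
    using \<sigma> by blast
next
  fix p assume "p \<in> branch 1 u\<^sub>0 ` {-1<..<1} \<union> branch (-1) u\<^sub>0 ` {-1<..<1}"
  then obtain \<sigma> \<tau> where \<sigma>: "\<sigma> \<in> {1, -1}" and "\<tau> \<in> {-1<..<1}" and p: "p = branch \<sigma> u\<^sub>0 \<tau>"
    by blast
  then have "\<bar>u_coord p - u\<^sub>0\<bar> < 1"
    using u_coord_branch[OF \<sigma>] by (auto simp: abs_mult)
  then show "p \<in> trisector R s c \<inter> {p. \<bar>u_coord p - u\<^sub>0\<bar> < 1}"
    using branch_mem_trisector[OF \<sigma>] p by simp
qed

lemma ordinary_real_node_trisector:
  assumes "u\<^sub>0^2 = R^2"
  shows "ordinary_real_node (trisector R s c) (u\<^sub>0 * c, u\<^sub>0 * s, (1 - R^2 * s^2) / 2)"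
  unfolding ordinary_real_node_def
proof (intro conjI exI allI)
  have "u\<^sub>0 \<noteq> 0" using assms R_nonzero by auto
  show "(u\<^sub>0 * c, u\<^sub>0 * s, (1 - R^2 * s^2) / 2) \<in> trisector R s c"
    using branch_mem_trisector[of 1 u\<^sub>0 0] branch_at_0[OF _ assms] by simp
  show "open {p. \<bar>u_coord p - u\<^sub>0\<bar> < 1}"
    by (intro open_Collect_less continuous_intros linear_continuous_on[OF bounded_linear_u_coord])
  show "(u\<^sub>0 * c, u\<^sub>0 * s, (1 - R^2 * s^2) / 2) \<in> {p. \<bar>u_coord p - u\<^sub>0\<bar> < 1}"
    using u_coord_branch[of 1 u\<^sub>0 0] branch_at_0[OF _ assms] by simp
  show "smooth_branch 1 (branch 1 u\<^sub>0) (u\<^sub>0 * c, u\<^sub>0 * s, (1 - R^2 * s^2) / 2)"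
    "smooth_branch 1 (branch (-1) u\<^sub>0) (u\<^sub>0 * c, u\<^sub>0 * s, (1 - R^2 * s^2) / 2)"
    using smooth_branch_branch[OF _ assms] by simp_all
  show "vector_derivative (branch (-1) u\<^sub>0) (at 0) \<noteq> a *\<^sub>R vector_derivative (branch 1 u\<^sub>0) (at 0)" for a
    using branch_tangents_independent[OF \<open>u\<^sub>0 \<noteq> 0\<close>] .
qed (rule trisector_Int_slab)

end

theorem theorem6:
  fixes R t :: real
  assumes "R > 0" and "t \<noteq> 0"
  defines "c \<equiv> (1 - t^2) / (1 + t^2)" and "s \<equiv> 2*t / (1 + t^2)"
  shows "space_curve_of_degree (trisector_C R s c) 8
    \<and> (\<exists>C1 C2. space_curve_of_degree C1 4 \<and> space_curve_of_degree C2 4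
         \<and> trisector_C R s c = C1 \<union> C2
         \<and> {p. cpt_of_real p \<in> C1 \<inter> C2}
             = {(R * c, R * s, (1 - R^2 * s^2)/2), (-R * c, -R * s, (1 - R^2 * s^2)/2)})
    \<and> ordinary_real_node (trisector R s c) (R * c, R * s, (1 - R^2 * s^2)/2)
    \<and> ordinary_real_node (trisector R s c) (-R * c, -R * s, (1 - R^2 * s^2)/2)"
proof -
  have "1 + t^2 > 0" by (simp add: add_pos_nonneg)
  then have "s^2 + c^2 = 1"
    unfolding s_def c_def by (simp add: power_divide add_divide_distrib[symmetric]) algebra
  moreover have "s \<noteq> 0" using \<open>t \<noteq> 0\<close> \<open>1 + t^2 > 0\<close> by (simp add: s_def)
  ultimately interpret trisector_k1 R s c
    using \<open>R > 0\<close> by unfold_locales simp_all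
  have "space_curve_of_degree (component 1) 4" "space_curve_of_degree (component (-1)) 4"
    by (simp_all add: space_curve_of_degree_component)
  moreover have "ordinary_real_node (trisector R s c) (R * c, R * s, (1 - R^2 * s^2)/2)"
    "ordinary_real_node (trisector R s c) (-R * c, -R * s, (1 - R^2 * s^2)/2)"
    using ordinary_real_node_trisector[of R] ordinary_real_node_trisector[of "-R"] by simp_all
  ultimately show ?thesis
    using space_curve_of_degree_trisector_C trisector_C_eq_Un real_points_component_Int by blast
qed

end
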